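(* Let $l,t,s,x,n$ be integers with $n\geq 2s+1$, $t\geq l$ and $2\leq l\leq x\leq s$. Then $$ex(n,\{K_{l,t},M_{s+1}\},x)\leq (t-1)\binom{x}{l}+(l-1)n-\left\lceil\frac{x(l-1)}{2}\right\rceil+ex(2(s-x)+1,K_{l,t}).$$
   Context: All graphs are finite and simple. $ex(m,K_{l,t})$ is the maximum number of edges of an $m$-vertex graph with no copy of the complete bipartite graph $K_{l,t}$; $M_{s+1}$ is the matching of $s+1$ disjoint edges. For a graph $G$ with matching number at most $s$, say $X\subseteq V(G)$ is admissible if $|X|+\sum_{i=1}^m\lfloor |V(C_i)|/2\rfloor\leq s$, where $C_1,\dots,C_m$ are the components of $G-X$; let $x(G)$ be the maximum size of an admissible set. Let $\mathscr{G}_x$ be the set of graphs on $n$ vertices containing neither $K_{l,t}$ nor $M_{s+1}$ as a subgraph and with $x(G)=x$, and $ex(n,\{K_{l,t},M_{s+1}\},x)=\max_{G\in\mathscr{G}_x}e(G)$. *)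

theory Defs
  imports Complex_Main "HOL-Library.Disjoint_Sets"
begin

definition simple_graph :: "'a set \<Rightarrow> 'a set set \<Rightarrow> bool" where
  "simple_graph V E \<longleftrightarrow> finite V \<and> (\<forall>e\<in>E. e \<subseteq> V \<and> card e = 2)"

definition has_Klt :: "nat \<Rightarrow> nat \<Rightarrow> 'a set \<Rightarrow> 'a set set \<Rightarrow> bool" where
  "has_Klt l t V E \<longleftrightarrow> (\<exists>A B. A \<subseteq> V \<and> B \<subseteq> V \<and> A \<inter> B = {} \<and> card A = l \<and> card B = t
      \<and> (\<forall>a\<in>A. \<forall>b\<in>B. {a, b} \<in> E))"

definition has_matching :: "nat \<Rightarrow> 'a set set \<Rightarrow> bool" where
  "has_matching k E \<longleftrightarrow> (\<exists>M \<subseteq> E. card M = k \<and> disjoint M)"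

definition ex_Klt :: "nat \<Rightarrow> nat \<Rightarrow> nat \<Rightarrow> nat" where
  "ex_Klt m l t = Max {card E | E. simple_graph {0..<m} E \<and> \<not> has_Klt l t {0..<m} E}"

definition adj_outside :: "'a set \<Rightarrow> 'a set set \<Rightarrow> 'a set \<Rightarrow> ('a \<times> 'a) set" where
  "adj_outside V E X = {(u, v). {u, v} \<in> E \<and> u \<in> V - X \<and> v \<in> V - X}"

definition components_minus :: "'a set \<Rightarrow> 'a set set \<Rightarrow> 'a set \<Rightarrow> 'a set set" where
  "components_minus V E X = (\<lambda>v. {w. (v, w) \<in> (adj_outside V E X)\<^sup>*}) ` (V - X)"

definition admissible :: "nat \<Rightarrow> 'a set \<Rightarrow> 'a set set \<Rightarrow> 'a set \<Rightarrow> bool" where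
  "admissible s V E X \<longleftrightarrow> X \<subseteq> V \<and>
     card X + (\<Sum>C\<in>components_minus V E X. card C div 2) \<le> s"

definition x_param :: "nat \<Rightarrow> 'a set \<Rightarrow> 'a set set \<Rightarrow> nat" where
  "x_param s V E = Max {card X | X. admissible s V E X}"

end

theory Submission
  imports Defs
begin

(* Fix an admissible X with |X| = x; it exists by the Tutte-Berge formula, which follows from
   Gallai's lemma.  Edges avoiding X lie inside the components C of G - X, each a K_{l,t}-free
   graph on at most 2 floor(|C|/2) + 1 vertices; gluing extremal graphs at a vertex shows
   ex(p+1) + ex(q+1) <= ex(p+q+1), and sum floor(|C|/2) <= s - x bounds these edges by
   ex(2(s-x)+1).  For the edges meeting X let d(v) = |N(v) \<inter> X|: twice their number is
   sum_{v in X} d(v) + 2 sum_{v notin X} d(v), and d <= (l-1) + (d choose l), while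
   sum_v (d(v) choose l) <= (t-1) (x choose l) since no l-subset of X has t common neighbours. *)

lemma simple_graph_finite_edges: "simple_graph V E \<Longrightarrow> finite E"
  unfolding simple_graph_def by (meson PowI finite_Pow_iff finite_subset subsetI)

lemma simple_graph_edgeE:
  assumes "simple_graph V E" "e \<in> E"
  obtains a b where "e = {a, b}" "a \<noteq> b" "a \<in> V" "b \<in> V"
  using assms unfolding simple_graph_def by (metis card_2_iff insert_subset)

lemma simple_graph_edge_at:
  assumes "simple_graph V E" "e \<in> E" "v \<in> e"
  obtains y where "e = {v, y}" "y \<noteq> v"
proof -
  obtain a b where ab: "e = {a, b}" "a \<noteq> b" using simple_graph_edgeE[OF assms(1,2)] by blast
  show ?thesis
  proof (cases "v = a")
    case True
    then show ?thesis using that ab by blast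
  next
    case False
    then have "v = b" using ab assms(3) by blast
    then show ?thesis using that[of a] ab by (simp add: insert_commute)
  qed
qed

lemma simple_graph_edge_neq: "simple_graph V E \<Longrightarrow> {a, b} \<in> E \<Longrightarrow> a \<noteq> b"
  unfolding simple_graph_def by fastforce

lemma simple_graph_subgraph:
  "simple_graph V E \<Longrightarrow> W \<subseteq> V \<Longrightarrow> F \<subseteq> E \<Longrightarrow> \<forall>e\<in>F. e \<subseteq> W \<Longrightarrow> simple_graph W F"
  unfolding simple_graph_def by (auto intro: finite_subset)

section \<open>Copies of \<open>K\<^sub>l\<^sub>,\<^sub>t\<close>\<close>

lemma has_KltI:
  assumes "A \<subseteq> W" "B \<subseteq> W" "A \<inter> B = {}" "card A = l" "card B = t"
    "\<And>a b. a \<in> A \<Longrightarrow> b \<in> B \<Longrightarrow> {a, b} \<in> F"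
  shows "has_Klt l t W F"
  unfolding has_Klt_def using assms by (intro exI[of _ A] exI[of _ B]) auto

lemma has_KltE:
  assumes "has_Klt l t W F"
  obtains A B where "A \<subseteq> W" "B \<subseteq> W" "A \<inter> B = {}" "card A = l" "card B = t"
    "\<And>a b. a \<in> A \<Longrightarrow> b \<in> B \<Longrightarrow> {a, b} \<in> F"
  using assms unfolding has_Klt_def by blast

lemma has_Klt_mono:
  assumes "has_Klt l t W F" "W \<subseteq> W'" "F \<subseteq> F'"
  shows "has_Klt l t W' F'"
  using assms(1)
proof (rule has_KltE)
  fix A B assume "A \<subseteq> W" "B \<subseteq> W" "A \<inter> B = {}" "card A = l" "card B = t"
    "\<And>a b. a \<in> A \<Longrightarrow> b \<in> B \<Longrightarrow> {a, b} \<in> F"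
  with assms(2,3) show ?thesis by (intro has_KltI[of A _ B]) auto
qed

lemma has_Klt_restrict_vertices:
  assumes "has_Klt l t W' F" "\<forall>e\<in>F. e \<subseteq> W" "1 \<le> l" "1 \<le> t"
  shows "has_Klt l t W F"
  using assms(1)
proof (rule has_KltE)
  fix A B assume AB: "A \<subseteq> W'" "B \<subseteq> W'" "A \<inter> B = {}" "card A = l" "card B = t"
    and edge: "\<And>a b. a \<in> A \<Longrightarrow> b \<in> B \<Longrightarrow> {a, b} \<in> F"
  obtain a0 b0 where "a0 \<in> A" "b0 \<in> B"
    using AB(4,5) assms(3,4) by (metis card.empty ex_in_conv not_one_le_zero)
  then have "A \<subseteq> W" "B \<subseteq> W" using edge assms(2) by blast+
  with AB edge show ?thesis by (intro has_KltI[of A _ B]) auto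
qed

definition map_edges :: "('a \<Rightarrow> 'b) \<Rightarrow> 'a set set \<Rightarrow> 'b set set" where
  "map_edges f F = image f ` F"

lemma simple_graph_map_edges:
  assumes "inj_on f W" "simple_graph W F"
  shows "simple_graph (f ` W) (map_edges f F)"
  using assms unfolding simple_graph_def map_edges_def
  by (auto simp: card_image inj_on_subset)

lemma card_map_edges:
  assumes "inj_on f W" "\<forall>e\<in>F. e \<subseteq> W"
  shows "card (map_edges f F) = card F"
  unfolding map_edges_def
proof (rule card_image, rule inj_onI)
  fix e e' assume "e \<in> F" "e' \<in> F" "f ` e = f ` e'"
  then show "e = e'" using assms inj_on_image_eq_iff by metis
qed

lemma has_Klt_map_edgesD:
  assumes inj: "inj_on f W" and F: "\<forall>e\<in>F. e \<subseteq> W"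
    and "has_Klt l t (f ` W) (map_edges f F)"
  shows "has_Klt l t W F"
  using assms(3)
proof (rule has_KltE)
  fix A B assume AB: "A \<subseteq> f ` W" "B \<subseteq> f ` W" "A \<inter> B = {}" "card A = l" "card B = t"
    and edge: "\<And>a b. a \<in> A \<Longrightarrow> b \<in> B \<Longrightarrow> {a, b} \<in> map_edges f F"
  define A' where "A' = {a\<in>W. f a \<in> A}"
  define B' where "B' = {b\<in>W. f b \<in> B}"
  have W: "A' \<subseteq> W" "B' \<subseteq> W" unfolding A'_def B'_def by auto
  have "f ` A' = A" "f ` B' = B" using AB(1,2) unfolding A'_def B'_def by auto
  moreover have "inj_on f A'" "inj_on f B'" using inj W by (auto intro: inj_on_subset)
  ultimately have "card A' = l" "card B' = t" using AB(4,5) card_image by metis+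
  moreover have "A' \<inter> B' = {}" using AB(3) unfolding A'_def B'_def by auto
  moreover have "{a, b} \<in> F" if "a \<in> A'" "b \<in> B'" for a b
  proof -
    have "{f a, f b} \<in> map_edges f F" using edge that unfolding A'_def B'_def by blast
    then obtain e where e: "e \<in> F" "f ` e = f ` {a, b}" unfolding map_edges_def by auto
    moreover have "e \<subseteq> W" "{a, b} \<subseteq> W" using F e(1) that W by auto
    ultimately show ?thesis using inj_on_image_eq_iff[OF inj] by metis
  qed
  ultimately show ?thesis using W by (intro has_KltI[of A' _ B']) auto
qed

section \<open>The extremal number \<open>ex(m, K\<^sub>l\<^sub>,\<^sub>t)\<close>\<close>

lemma finite_Klt_free_sizes:
  "finite {card E | E. simple_graph {0..<m::nat} E \<and> \<not> has_Klt l t {0..<m} E}"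
proof (rule finite_subset)
  show "{card E | E. simple_graph {0..<m} E \<and> \<not> has_Klt l t {0..<m} E}
        \<subseteq> card ` Pow (Pow {0..<m})"
    unfolding simple_graph_def by auto
qed simp

lemma ex_Klt_attained:
  assumes "1 \<le> l" "1 \<le> t"
  obtains F where "simple_graph {0..<m} F" "\<not> has_Klt l t {0..<m} F" "card F = ex_Klt m l t"
proof -
  have "simple_graph {0..<m} {}" unfolding simple_graph_def by simp
  moreover have "\<not> has_Klt l t {0..<m} {}"
    using assms by (auto elim!: has_KltE simp: card_gt_0_iff)
  ultimately have "{card E | E. simple_graph {0..<m} E \<and> \<not> has_Klt l t {0..<m} E} \<noteq> {}"
    by blast
  from Max_in[OF finite_Klt_free_sizes this] show ?thesis
    using that unfolding ex_Klt_def by auto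
qed

lemma card_le_ex_Klt:
  assumes G: "simple_graph W F" and free: "\<not> has_Klt l t W F" and "card W \<le> m"
    and "1 \<le> l" "1 \<le> t"
  shows "card F \<le> ex_Klt m l t"
proof -
  have "finite W" using G unfolding simple_graph_def by simp
  then obtain f where "bij_betw f W {0..<card W}"
    using ex_bij_betw_finite_nat by blast
  then have inj: "inj_on f W" and fW: "f ` W \<subseteq> {0..<m}"
    using \<open>card W \<le> m\<close> unfolding bij_betw_def by auto
  have F: "\<forall>e\<in>F. e \<subseteq> W" using G unfolding simple_graph_def by blast
  have "simple_graph {0..<m} (map_edges f F)"
    using simple_graph_map_edges[OF inj G] fW unfolding simple_graph_def
    by (meson subset_trans finite_atLeastLessThan)
  moreover have "\<not> has_Klt l t {0..<m} (map_edges f F)"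
  proof
    assume "has_Klt l t {0..<m} (map_edges f F)"
    moreover have "\<forall>e\<in>map_edges f F. e \<subseteq> f ` W" using F unfolding map_edges_def by auto
    ultimately have "has_Klt l t (f ` W) (map_edges f F)"
      using has_Klt_restrict_vertices assms(4,5) by blast
    with free show False using has_Klt_map_edgesD[OF inj F] by blast
  qed
  ultimately have "card (map_edges f F) \<le> ex_Klt m l t"
    unfolding ex_Klt_def by (intro Max_ge[OF finite_Klt_free_sizes]) blast
  then show ?thesis using card_map_edges[OF inj F] by simp
qed

lemma ex_Klt_mono:
  assumes "m \<le> m'" "1 \<le> l" "1 \<le> t"
  shows "ex_Klt m l t \<le> ex_Klt m' l t"
proof -
  obtain F where "simple_graph {0..<m} F" "\<not> has_Klt l t {0..<m} F" "card F = ex_Klt m l t"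
    using ex_Klt_attained assms(2,3) by blast
  with assms show ?thesis using card_le_ex_Klt[of "{0..<m}" F l t m'] by auto
qed

lemma two_le_card_ex_neq:
  assumes "2 \<le> card A" shows "\<exists>a\<in>A. a \<noteq> c"
proof (rule ccontr)
  assume "\<not> (\<exists>a\<in>A. a \<noteq> c)"
  then have "card A \<le> card {c}" by (intro card_mono) auto
  with assms show False by simp
qed

lemma edge_of_union_at_cut_vertex:
  assumes "W1 \<inter> W2 \<subseteq> {c}" "\<forall>e\<in>F1. e \<subseteq> W1" "\<forall>e\<in>F2. e \<subseteq> W2"
    and "{a, b} \<in> F1 \<union> F2" "a \<in> W1" "a \<noteq> c"
  shows "{a, b} \<in> F1" "b \<in> W1"
  using assms by blast+

lemma complete_bipartite_in_side:
  assumes cut: "W \<inter> W' \<subseteq> {c}" and F: "\<forall>e\<in>F. e \<subseteq> W" and F': "\<forall>e\<in>F'. e \<subseteq> W'"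
    and edge: "\<And>a b. a \<in> A \<Longrightarrow> b \<in> B \<Longrightarrow> {a, b} \<in> F \<union> F'" and "A \<inter> B = {}"
    and a1: "a1 \<in> A" "a1 \<in> W" "a1 \<noteq> c" and b1: "b1 \<in> B" "b1 \<noteq> c"
  shows "A \<subseteq> W" "B \<subseteq> W" "\<And>a b. a \<in> A \<Longrightarrow> b \<in> B \<Longrightarrow> {a, b} \<in> F"
proof -
  note side_edge = edge_of_union_at_cut_vertex[OF cut F F']
  have edge': "{b, a} \<in> F \<union> F'" if "a \<in> A" "b \<in> B" for a b
    using edge[OF that] by (simp add: insert_commute)
  show BW: "B \<subseteq> W" using side_edge(2) edge a1 by blast
  show AW: "A \<subseteq> W" using side_edge(2) edge' b1 BW by blast
  fix a b assume ab: "a \<in> A" "b \<in> B"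
  show "{a, b} \<in> F"
  proof (cases "a = c")
    case True
    then have "b \<noteq> c" using \<open>A \<inter> B = {}\<close> ab by blast
    then have "{b, a} \<in> F" using side_edge(1) edge' ab BW by blast
    then show ?thesis by (simp add: insert_commute)
  next
    case False
    then show ?thesis using side_edge(1) edge ab AW by blast
  qed
qed

text \<open>This is where \<open>l, t \<ge> 2\<close> is needed: then \<open>K\<^sub>l\<^sub>,\<^sub>t\<close> has no cut vertex.\<close>
lemma has_Klt_union_at_cut_vertex:
  assumes cut: "W1 \<inter> W2 \<subseteq> {c}" and F1: "\<forall>e\<in>F1. e \<subseteq> W1" and F2: "\<forall>e\<in>F2. e \<subseteq> W2"
    and "has_Klt l t (W1 \<union> W2) (F1 \<union> F2)" "2 \<le> l" "2 \<le> t"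
  shows "has_Klt l t W1 F1 \<or> has_Klt l t W2 F2"
  using assms(4)
proof (rule has_KltE)
  fix A B assume AB: "A \<subseteq> W1 \<union> W2" "B \<subseteq> W1 \<union> W2" "A \<inter> B = {}" "card A = l" "card B = t"
    and edge: "\<And>a b. a \<in> A \<Longrightarrow> b \<in> B \<Longrightarrow> {a, b} \<in> F1 \<union> F2"
  obtain a1 b1 where a1: "a1 \<in> A" "a1 \<noteq> c" and b1: "b1 \<in> B" "b1 \<noteq> c"
    using two_le_card_ex_neq AB(4,5) assms(5,6) by metis
  show ?thesis
  proof (cases "a1 \<in> W1")
    case True
    note side = complete_bipartite_in_side[OF cut F1 F2 edge AB(3) a1(1) True a1(2) b1]
    have "has_Klt l t W1 F1" using side AB(3-5) by (intro has_KltI[of A _ B]) auto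
    then show ?thesis ..
  next
    case False
    then have "a1 \<in> W2" using a1 AB(1) by blast
    moreover have "W2 \<inter> W1 \<subseteq> {c}" "\<And>a b. a \<in> A \<Longrightarrow> b \<in> B \<Longrightarrow> {a, b} \<in> F2 \<union> F1"
      using cut edge by blast+
    ultimately have "A \<subseteq> W2" "B \<subseteq> W2" "\<And>a b. a \<in> A \<Longrightarrow> b \<in> B \<Longrightarrow> {a, b} \<in> F2"
      using complete_bipartite_in_side[OF _ F2 F1 _ AB(3) a1(1) _ a1(2) b1] by blast+
    then have "has_Klt l t W2 F2" using AB(3-5) by (intro has_KltI[of A _ B]) auto
    then show ?thesis ..
  qed
qed

lemma simple_graph_Un_at_cut_vertex:
  assumes G1: "simple_graph W1 F1" and G2: "simple_graph W2 F2" and cut: "W1 \<inter> W2 \<subseteq> {c}"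
  shows "simple_graph (W1 \<union> W2) (F1 \<union> F2)" "card (F1 \<union> F2) = card F1 + card F2"
proof -
  show "simple_graph (W1 \<union> W2) (F1 \<union> F2)"
    using G1 G2 unfolding simple_graph_def by (metis Un_iff finite_UnI le_supI1 le_supI2)
  have "F1 \<inter> F2 = {}"
  proof (rule equals0I)
    fix e assume "e \<in> F1 \<inter> F2"
    then have "e \<subseteq> {c}" "card e = 2" using G1 G2 cut unfolding simple_graph_def by blast+
    then show False using card_mono[of "{c}" e] by simp
  qed
  then show "card (F1 \<union> F2) = card F1 + card F2"
    using G1 G2 simple_graph_finite_edges card_Un_disjoint by metis
qed

lemma ex_Klt_superadditive:
  assumes "2 \<le> l" "2 \<le> t"
  shows "ex_Klt (p + 1) l t + ex_Klt (q + 1) l t \<le> ex_Klt (p + q + 1) l t"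
proof -
  have lt: "1 \<le> l" "1 \<le> t" using assms by auto
  obtain F1 where G1: "simple_graph {0..<p+1} F1" and free1: "\<not> has_Klt l t {0..<p+1} F1"
    and card1: "card F1 = ex_Klt (p + 1) l t"
    using ex_Klt_attained[OF lt] by blast
  obtain F2 where G2: "simple_graph {0..<q+1} F2" and free2: "\<not> has_Klt l t {0..<q+1} F2"
    and card2: "card F2 = ex_Klt (q + 1) l t"
    using ex_Klt_attained[OF lt] by blast
  txt \<open>Glue the two extremal graphs at the vertex \<open>p\<close>.\<close>
  define f where "f = (\<lambda>v::nat. v + p)"
  define F2' where "F2' = map_edges f F2"
  have inj: "inj_on f {0..<q+1}" unfolding f_def by simp
  have W2: "f ` {0..<q+1} = {p..<p+q+1}"
    unfolding f_def using image_add_atLeastLessThan'[of p 0 "q+1"] by (simp add: ac_simps)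
  have in2: "\<forall>e\<in>F2. e \<subseteq> {0..<q+1}" using G2 unfolding simple_graph_def by blast
  have G2': "simple_graph {p..<p+q+1} F2'"
    using simple_graph_map_edges[OF inj G2] W2 unfolding F2'_def by simp
  have free2': "\<not> has_Klt l t {p..<p+q+1} F2'"
    using has_Klt_map_edgesD[OF inj in2] free2 W2 unfolding F2'_def by auto
  have cut: "{0..<p+1} \<inter> {p..<p+q+1} \<subseteq> {p}" by auto
  have E1: "\<forall>e\<in>F1. e \<subseteq> {0..<p+1}" and E2: "\<forall>e\<in>F2'. e \<subseteq> {p..<p+q+1}"
    using G1 G2' unfolding simple_graph_def by auto
  have V: "{0..<p+1} \<union> {p..<p+q+1} = {0..<p+q+1}" by auto
  have "\<not> has_Klt l t {0..<p+q+1} (F1 \<union> F2')"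
    using has_Klt_union_at_cut_vertex[OF cut E1 E2 _ assms] free1 free2' V by metis
  then have "card (F1 \<union> F2') \<le> ex_Klt (p + q + 1) l t"
    using card_le_ex_Klt simple_graph_Un_at_cut_vertex(1)[OF G1 G2' cut] V lt by fastforce
  moreover have "card F2' = card F2" using card_map_edges[OF inj in2] unfolding F2'_def .
  ultimately show ?thesis using card1 card2 simple_graph_Un_at_cut_vertex(2)[OF G1 G2' cut] by simp
qed

lemma sum_ex_Klt_le:
  assumes "finite I" "2 \<le> l" "2 \<le> t"
  shows "(\<Sum>i\<in>I. ex_Klt (2 * k i + 1) l t) \<le> ex_Klt (2 * (\<Sum>i\<in>I. k i) + 1) l t"
  using assms(1)
proof (induction I rule: finite_induct)
  case empty
  then show ?case by simp
next
  case (insert i I)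
  then have "(\<Sum>i\<in>insert i I. ex_Klt (2 * k i + 1) l t)
      \<le> ex_Klt (2 * k i + 1) l t + ex_Klt (2 * (\<Sum>i\<in>I. k i) + 1) l t"
    by simp
  also have "\<dots> \<le> ex_Klt (2 * k i + 2 * (\<Sum>i\<in>I. k i) + 1) l t"
    using ex_Klt_superadditive[OF assms(2,3)] by simp
  finally show ?case using insert by (simp add: algebra_simps)
qed

section \<open>Components of \<open>G - X\<close>\<close>

lemma adj_outsideD: "(a, b) \<in> adj_outside V E X \<Longrightarrow> a \<in> V - X \<and> b \<in> V - X \<and> {a, b} \<in> E"
  unfolding adj_outside_def by auto

lemma sym_adj_outside: "sym (adj_outside V E X)"
  unfolding adj_outside_def sym_def by (auto simp: insert_commute)

lemma adj_outside_rtrancl_sym: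
  "(a, b) \<in> (adj_outside V E X)\<^sup>* \<Longrightarrow> (b, a) \<in> (adj_outside V E X)\<^sup>*"
  by (rule symD[OF sym_rtrancl[OF sym_adj_outside]])

lemma component_subset: "C \<in> components_minus V E X \<Longrightarrow> C \<subseteq> V - X"
proof
  fix w assume "C \<in> components_minus V E X" "w \<in> C"
  then obtain v where "(v, w) \<in> (adj_outside V E X)\<^sup>*" "v \<in> V - X"
    unfolding components_minus_def by blast
  then show "w \<in> V - X"
    by (induction rule: rtrancl_induct) (auto dest: adj_outsideD)
qed

lemma component_connected:
  assumes "C \<in> components_minus V E X" "u \<in> C" "v \<in> C"
  shows "(u, v) \<in> (adj_outside V E X)\<^sup>*"
proof -
  obtain c where "C = {w. (c, w) \<in> (adj_outside V E X)\<^sup>*}"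
    using assms(1) unfolding components_minus_def by blast
  then have "(u, c) \<in> (adj_outside V E X)\<^sup>*" "(c, v) \<in> (adj_outside V E X)\<^sup>*"
    using assms(2,3) adj_outside_rtrancl_sym by auto
  then show ?thesis by (rule rtrancl_trans)
qed

lemma components_eq:
  assumes "C1 \<in> components_minus V E X" "C2 \<in> components_minus V E X" "w \<in> C1" "w \<in> C2"
  shows "C1 = C2"
proof -
  obtain c1 c2 where c: "C1 = {y. (c1, y) \<in> (adj_outside V E X)\<^sup>*}"
    "C2 = {y. (c2, y) \<in> (adj_outside V E X)\<^sup>*}"
    using assms(1,2) unfolding components_minus_def by blast
  then have "(c1, w) \<in> (adj_outside V E X)\<^sup>*" "(c2, w) \<in> (adj_outside V E X)\<^sup>*"
    using assms(3,4) by auto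
  then have "(c1, c2) \<in> (adj_outside V E X)\<^sup>*" "(c2, c1) \<in> (adj_outside V E X)\<^sup>*"
    by (meson adj_outside_rtrancl_sym rtrancl_trans)+
  then have "(c1, y) \<in> (adj_outside V E X)\<^sup>* \<longleftrightarrow> (c2, y) \<in> (adj_outside V E X)\<^sup>*" for y
    using rtrancl_trans by metis
  then show ?thesis unfolding c by simp
qed

lemma edge_in_component:
  assumes "simple_graph V E" "e \<in> E" "e \<inter> X = {}"
  shows "\<exists>C\<in>components_minus V E X. e \<subseteq> C"
proof -
  obtain p q where pq: "e = {p, q}" "p \<in> V" "q \<in> V" using simple_graph_edgeE[OF assms(1,2)] by metis
  then have "(p, q) \<in> adj_outside V E X" using assms(2,3) unfolding adj_outside_def by auto
  then have "e \<subseteq> {w. (p, w) \<in> (adj_outside V E X)\<^sup>*}" using pq by auto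
  moreover have "{w. (p, w) \<in> (adj_outside V E X)\<^sup>*} \<in> components_minus V E X"
    unfolding components_minus_def using pq assms(3) by blast
  ultimately show ?thesis by blast
qed

lemma finite_components: "finite V \<Longrightarrow> finite (components_minus V E X)"
  unfolding components_minus_def by simp

lemma card_edges_avoiding_eq_sum:
  assumes G: "simple_graph V E" and "F \<subseteq> E"
  shows "card {e\<in>F. e \<inter> X = {}} = (\<Sum>C\<in>components_minus V E X. card {e\<in>F. e \<subseteq> C})"
proof -
  have "{e\<in>F. e \<inter> X = {}} = (\<Union>C\<in>components_minus V E X. {e\<in>F. e \<subseteq> C})"
  proof
    show "{e\<in>F. e \<inter> X = {}} \<subseteq> (\<Union>C\<in>components_minus V E X. {e\<in>F. e \<subseteq> C})"
      using edge_in_component[OF G] \<open>F \<subseteq> E\<close> by fastforce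
    show "(\<Union>C\<in>components_minus V E X. {e\<in>F. e \<subseteq> C}) \<subseteq> {e\<in>F. e \<inter> X = {}}"
      using component_subset by fastforce
  qed
  moreover have "card (\<Union>C\<in>components_minus V E X. {e\<in>F. e \<subseteq> C})
      = (\<Sum>C\<in>components_minus V E X. card {e\<in>F. e \<subseteq> C})"
  proof (rule card_UN_disjoint)
    show "finite (components_minus V E X)"
      using G finite_components unfolding simple_graph_def by blast
    show "\<forall>C\<in>components_minus V E X. finite {e\<in>F. e \<subseteq> C}"
      using simple_graph_finite_edges[OF G] \<open>F \<subseteq> E\<close> by (auto intro: finite_subset)
    show "\<forall>C1\<in>components_minus V E X. \<forall>C2\<in>components_minus V E X.
        C1 \<noteq> C2 \<longrightarrow> {e\<in>F. e \<subseteq> C1} \<inter> {e\<in>F. e \<subseteq> C2} = {}"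
    proof (intro ballI impI equals0I)
      fix C1 C2 e
      assume C: "C1 \<in> components_minus V E X" "C2 \<in> components_minus V E X" "C1 \<noteq> C2"
        and "e \<in> {e\<in>F. e \<subseteq> C1} \<inter> {e\<in>F. e \<subseteq> C2}"
      then have "e \<in> E" "e \<subseteq> C1" "e \<subseteq> C2" using \<open>F \<subseteq> E\<close> by auto
      moreover obtain a b where "e = {a, b}" using simple_graph_edgeE[OF G \<open>e \<in> E\<close>] by metis
      ultimately show False using components_eq[OF C(1,2)] C(3) by blast
    qed
  qed
  ultimately show ?thesis by simp
qed

lemma components_minus_delete_vertex:
  "components_minus (V - {u}) {e\<in>E. u \<notin> e} X = components_minus V E (insert u X)"
proof -
  have "adj_outside (V - {u}) {e\<in>E. u \<notin> e} X = adj_outside V E (insert u X)"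
    unfolding adj_outside_def by auto
  moreover have "V - {u} - X = V - insert u X" by auto
  ultimately show ?thesis unfolding components_minus_def by simp
qed

section \<open>Maximum matchings and the Tutte--Berge formula\<close>

definition matching :: "'a set set \<Rightarrow> 'a set set \<Rightarrow> bool" where
  "matching E M \<longleftrightarrow> M \<subseteq> E \<and> disjoint M"

definition max_matching :: "'a set set \<Rightarrow> 'a set set \<Rightarrow> bool" where
  "max_matching E M \<longleftrightarrow> matching E M \<and> (\<forall>M'. matching E M' \<longrightarrow> card M' \<le> card M)"

lemma matching_subset: "matching E M \<Longrightarrow> M' \<subseteq> M \<Longrightarrow> matching E M'"
  unfolding matching_def by (meson order_trans pairwise_subset)

lemma finite_matching: "simple_graph V E \<Longrightarrow> matching E M \<Longrightarrow> finite M"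
  unfolding matching_def using simple_graph_finite_edges finite_subset by metis

lemma card_matching_le:
  assumes "\<not> has_matching (s + 1) E" "matching E M" "finite M"
  shows "card M \<le> s"
proof (rule ccontr)
  assume "\<not> card M \<le> s"
  then obtain M' where "M' \<subseteq> M" "card M' = s + 1"
    using obtain_subset_with_card_n[of "s + 1" M] by auto
  then show False
    using assms(1,2) matching_subset unfolding has_matching_def matching_def by metis
qed

lemma max_matching_exists: "finite E \<Longrightarrow> \<exists>M. max_matching E M"
proof -
  assume "finite E"
  then have "\<forall>M. matching E M \<longrightarrow> card M < Suc (card E)"
    unfolding matching_def by (simp add: card_mono less_Suc_eq_le)
  moreover have "matching E {}" unfolding matching_def by simp
  ultimately show ?thesis
    using Lattices_Big.ex_has_greatest_nat[of "matching E" "{}" card] unfolding max_matching_def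
    by blast
qed

lemma card_Union_matching:
  assumes G: "simple_graph V E" and M: "matching E M"
  shows "card (\<Union>M) = 2 * card M"
proof -
  have edges: "\<And>e. e \<in> M \<Longrightarrow> card e = 2" using G M unfolding simple_graph_def matching_def by auto
  then have "card (\<Union>M) = sum card M"
    using M unfolding matching_def by (intro card_Union_disjoint) (auto intro: card_ge_0_finite)
  also have "\<dots> = 2 * card M" using edges by simp
  finally show ?thesis .
qed

lemma max_matching_edge_meets:
  assumes G: "simple_graph V E" and M: "max_matching E M" and "e \<in> E"
  shows "e \<inter> \<Union>M \<noteq> {}"
proof
  assume avoid: "e \<inter> \<Union>M = {}"
  have "e \<noteq> {}" using G \<open>e \<in> E\<close> by (metis simple_graph_edgeE insert_not_empty)
  with avoid have "e \<notin> M" by blast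
  have "matching E (insert e M)"
    using M \<open>e \<in> E\<close> avoid unfolding max_matching_def matching_def
    by (auto simp: pairwise_insert disjnt_def)
  then have "card (insert e M) \<le> card M" using M unfolding max_matching_def by blast
  moreover have "finite M" using M G finite_matching unfolding max_matching_def by blast
  ultimately show False using \<open>e \<notin> M\<close> by simp
qed

lemma max_matching_swap:
  assumes G: "simple_graph V E" and N: "max_matching E N" and "f \<in> N" "e \<in> E" "e \<notin> N"
    and disj: "\<And>g. g \<in> N - {f} \<Longrightarrow> disjnt e g"
  shows "max_matching E (insert e (N - {f}))"
proof -
  have mN: "N \<subseteq> E" "disjoint N" using N unfolding max_matching_def matching_def by auto
  have "disjoint (N - {f})" using mN(2) by (rule pairwise_subset) blast
  with disj have "disjoint (insert e (N - {f}))" by (simp add: pairwise_insert disjnt_sym)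
  then have "matching E (insert e (N - {f}))" using mN(1) \<open>e \<in> E\<close> unfolding matching_def by blast
  moreover have "card (insert e (N - {f})) = card N"
  proof -
    have "finite N" using finite_matching[OF G] N unfolding max_matching_def by blast
    moreover have "card N > 0" using \<open>finite N\<close> \<open>f \<in> N\<close> card_gt_0_iff by blast
    ultimately show ?thesis using \<open>f \<in> N\<close> \<open>e \<notin> N\<close> by simp
  qed
  ultimately show ?thesis using N unfolding max_matching_def by simp
qed

text \<open>Swap the \<open>N\<close>-edge at the partner \<open>y\<close> of \<open>z\<close> for the \<open>M\<close>-edge \<open>{z, y}\<close>.\<close>
lemma max_matching_exchange:
  assumes G: "simple_graph V E" and M: "max_matching E M" and N: "max_matching E N"
    and "e \<in> M" "z \<in> e" "z \<notin> \<Union>N"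
  shows "\<exists>N'. max_matching E N' \<and> \<Union>N' \<subseteq> insert z (\<Union>N) \<and> card (M \<inter> N) < card (M \<inter> N')"
proof -
  have mM: "M \<subseteq> E" "disjoint M" and mN: "disjoint N"
    using M N unfolding max_matching_def matching_def by auto
  have "e \<in> E" using mM \<open>e \<in> M\<close> by blast
  obtain y where e: "e = {z, y}" "y \<noteq> z" by (rule simple_graph_edge_at[OF G \<open>e \<in> E\<close> \<open>z \<in> e\<close>])
  have "y \<in> \<Union>N" using max_matching_edge_meets[OF G N \<open>e \<in> E\<close>] e \<open>z \<notin> \<Union>N\<close> by blast
  then obtain f where f: "f \<in> N" "y \<in> f" by blast
  have "e \<notin> N" using \<open>z \<notin> \<Union>N\<close> \<open>z \<in> e\<close> by blast
  have "f \<notin> M"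
  proof
    assume "f \<in> M"
    moreover have "f \<noteq> e" using f \<open>e \<notin> N\<close> by blast
    ultimately have "disjnt e f" using pairwiseD[OF mM(2) \<open>e \<in> M\<close>] by blast
    then show False using e f(2) unfolding disjnt_def by blast
  qed
  have "disjnt e g" if "g \<in> N - {f}" for g
  proof -
    have "z \<notin> g" using \<open>z \<notin> \<Union>N\<close> that by blast
    moreover have "disjnt f g" using pairwiseD[OF mN f(1)] that by blast
    then have "y \<notin> g" using f(2) unfolding disjnt_def by blast
    ultimately show ?thesis using e(1) unfolding disjnt_def by blast
  qed
  then have "max_matching E (insert e (N - {f}))"
    by (rule max_matching_swap[OF G N f(1) \<open>e \<in> E\<close> \<open>e \<notin> N\<close>])
  moreover have "\<Union>(insert e (N - {f})) \<subseteq> insert z (\<Union>N)" using e f by blast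
  moreover have "M \<inter> insert e (N - {f}) = insert e (M \<inter> N)" using \<open>e \<in> M\<close> \<open>f \<notin> M\<close> by blast
  then have "card (M \<inter> N) < card (M \<inter> insert e (N - {f}))"
    using finite_matching[OF G] N \<open>e \<notin> N\<close> unfolding max_matching_def by simp
  ultimately show ?thesis by blast
qed

lemma finite_Union_matching: "simple_graph V E \<Longrightarrow> matching E M \<Longrightarrow> finite (\<Union>M)"
  unfolding simple_graph_def matching_def by (meson Sup_le_iff finite_subset subset_iff)

lemma card_Union_max_matchings_diff:
  assumes G: "simple_graph V E" and "max_matching E M" "max_matching E N"
  shows "card (\<Union>N - \<Union>M) = card (\<Union>M - \<Union>N)"
proof -
  have "card (\<Union>M) = card (\<Union>N)"
    using card_Union_matching[OF G] assms(2,3) unfolding max_matching_def by (metis le_antisym)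
  moreover have "finite (\<Union>M)" "finite (\<Union>N)"
    using finite_Union_matching[OF G] assms(2,3) unfolding max_matching_def by blast+
  ultimately show ?thesis by (simp add: card_Diff_subset_Int Int_commute)
qed

lemma ex_max_card_Int:
  assumes "finite M" "P N0"
  obtains N where "P N" "\<And>N'. P N' \<Longrightarrow> card (M \<inter> N') \<le> card (M \<inter> N)"
proof -
  have "\<forall>N. P N \<longrightarrow> card (M \<inter> N) < Suc (card M)"
    using assms(1) by (simp add: card_mono less_Suc_eq_le)
  then show ?thesis
    using Lattices_Big.ex_has_greatest_nat[of P N0 "\<lambda>N. card (M \<inter> N)"] assms(2) that by blast
qed

text \<open>Along a path from \<open>u\<close> to \<open>v\<close>, take a maximum matching missing the
  next-to-last vertex \<open>w\<close> that is closest to \<open>M\<close>; it covers \<open>u\<close> and \<open>v\<close>, so \<open>M\<close> covers a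
  vertex \<open>z \<noteq> w\<close> that it misses, and an exchange at \<open>z\<close> brings it closer to \<open>M\<close>.\<close>
lemma unmatched_vertices_disconnected:
  assumes G: "simple_graph V E" and missed: "\<forall>w\<in>V. \<exists>N. max_matching E N \<and> w \<notin> \<Union>N"
    and path: "(u, v) \<in> (adj_outside V E {})\<^sup>*"
  shows "max_matching E M \<Longrightarrow> u \<noteq> v \<Longrightarrow> u \<notin> \<Union>M \<Longrightarrow> v \<notin> \<Union>M \<Longrightarrow> False"
  using path
proof (induction arbitrary: M rule: rtrancl_induct)
  case base
  then show ?case by simp
next
  case (step w v)
  have "{w, v} \<in> E" "w \<in> V" using adj_outsideD[OF step.hyps(2)] by auto
  then have cover: "v \<in> \<Union>N" if "max_matching E N" "w \<notin> \<Union>N" for N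
    using max_matching_edge_meets[OF G that(1)] that(2) by blast
  show False
  proof (cases "w = u")
    case True
    then show False using cover step.prems by blast
  next
    case False
    have "w \<in> \<Union>M" using cover step.prems by blast
    have "finite M" using finite_matching[OF G] step.prems(1) unfolding max_matching_def by blast
    define P where "P N \<longleftrightarrow> max_matching E N \<and> w \<notin> \<Union>N" for N
    obtain N0 where "P N0" using missed \<open>w \<in> V\<close> unfolding P_def by blast
    obtain N where "P N" and closest: "\<And>N'. P N' \<Longrightarrow> card (M \<inter> N') \<le> card (M \<inter> N)"
      using ex_max_card_Int[of M P N0] \<open>finite M\<close> \<open>P N0\<close> by blast
    then have N: "max_matching E N" "w \<notin> \<Union>N" unfolding P_def by auto
    have "u \<in> \<Union>N" using step.IH N False by blast
    moreover have "v \<in> \<Union>N" using cover N by blast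
    ultimately have "{u, v} \<subseteq> \<Union>N - \<Union>M" using step.prems by blast
    then have "2 \<le> card (\<Union>N - \<Union>M)"
      using card_mono[OF _ \<open>{u, v} \<subseteq> _\<close>] finite_Union_matching[OF G] N(1) step.prems(2)
      unfolding max_matching_def by simp
    then have "2 \<le> card (\<Union>M - \<Union>N)"
      using card_Union_max_matchings_diff[OF G step.prems(1) N(1)] by simp
    then obtain z where z: "z \<in> \<Union>M - \<Union>N" "z \<noteq> w" using two_le_card_ex_neq by metis
    then obtain e where "e \<in> M" "z \<in> e" by blast
    then obtain N' where "max_matching E N'" "\<Union>N' \<subseteq> insert z (\<Union>N)"
        "card (M \<inter> N) < card (M \<inter> N')"
      using max_matching_exchange[OF G step.prems(1) N(1)] z(1) by blast
    moreover have "P N'" using calculation(1,2) N(2) z(2) unfolding P_def by blast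
    ultimately show False using closest by (meson not_le)
  qed
qed

lemma card_component_le_matched:
  assumes G: "simple_graph V E" and missed: "\<forall>w\<in>V. \<exists>N. max_matching E N \<and> w \<notin> \<Union>N"
    and M: "max_matching E M" and C: "C \<in> components_minus V E {}"
  shows "card C div 2 \<le> card {e\<in>M. e \<subseteq> C}"
proof -
  have mM: "matching E M" using M unfolding max_matching_def by blast
  have "C \<subseteq> V" using component_subset[OF C] by blast
  then have finC: "finite C" using G unfolding simple_graph_def by (blast intro: finite_subset)
  have "u = v" if "u \<in> C - \<Union>M" "v \<in> C - \<Union>M" for u v
  proof (rule ccontr)
    assume "u \<noteq> v"
    have "(u, v) \<in> (adj_outside V E {})\<^sup>*" using component_connected[OF C] that by blast
    from unmatched_vertices_disconnected[OF G missed this M \<open>u \<noteq> v\<close>] that show False by blast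
  qed
  then have unmatched: "card (C - \<Union>M) \<le> 1"
    using card_le_Suc0_iff_eq[OF finite_Diff[OF finC]] by simp
  have cover: "C \<subseteq> \<Union>{e\<in>M. e \<subseteq> C} \<union> (C - \<Union>M)"
  proof
    fix z assume "z \<in> C"
    show "z \<in> \<Union>{e\<in>M. e \<subseteq> C} \<union> (C - \<Union>M)"
    proof (cases "z \<in> \<Union>M")
      case True
      then obtain e where e: "e \<in> M" "z \<in> e" by blast
      then have "e \<in> E" using mM unfolding matching_def by blast
      then obtain C' where C': "C' \<in> components_minus V E {}" "e \<subseteq> C'"
        using edge_in_component[OF G] by blast
      have "C' = C" using components_eq[OF C'(1) C, of z] e(2) C'(2) \<open>z \<in> C\<close> by blast
      then show ?thesis using e C'(2) by blast
    qed (use \<open>z \<in> C\<close> in blast)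
  qed
  have matched: "card (\<Union>{e\<in>M. e \<subseteq> C}) = 2 * card {e\<in>M. e \<subseteq> C}"
    by (rule card_Union_matching[OF G matching_subset[OF mM]]) blast
  have "finite (\<Union>{e\<in>M. e \<subseteq> C})" by (rule finite_subset[OF _ finC]) blast
  then have "card C \<le> card (\<Union>{e\<in>M. e \<subseteq> C}) + card (C - \<Union>M)"
    using card_mono[OF _ cover] card_Un_le[of "\<Union>{e\<in>M. e \<subseteq> C}" "C - \<Union>M"] finC
    by (meson finite_Diff finite_UnI le_trans)
  then show ?thesis using unmatched matched by simp
qed

lemma card_max_matching_delete_vertex:
  assumes M: "max_matching E M" and u: "\<And>N. max_matching E N \<Longrightarrow> u \<in> \<Union>N"
    and M': "max_matching {e\<in>E. u \<notin> e} M'"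
  shows "card M' < card M"
proof -
  have "matching E M'" using M' unfolding max_matching_def matching_def by auto
  then have "card M' \<le> card M" using M unfolding max_matching_def by blast
  moreover have "card M' \<noteq> card M"
  proof
    assume "card M' = card M"
    with \<open>matching E M'\<close> M have "max_matching E M'" unfolding max_matching_def by simp
    then have "u \<in> \<Union>M'" by (rule u)
    with M' show False unfolding max_matching_def matching_def by auto
  qed
  ultimately show ?thesis by simp
qed

text \<open>The Tutte--Berge formula, by induction on \<open>|V|\<close>: a vertex covered by every maximum
  matching is put into \<open>X\<close>; if there is none, \<open>X = {}\<close> is admissible by Gallai's lemma.\<close>
lemma max_matching_admissible:
  assumes "simple_graph V E" "max_matching E M"
  shows "\<exists>X. admissible (card M) V E X"
  using assms
proof (induction "card V" arbitrary: V E M rule: less_induct)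
  case less
  note G = less.prems(1) and M = less.prems(2)
  show ?case
  proof (cases "\<exists>u\<in>V. \<forall>N. max_matching E N \<longrightarrow> u \<in> \<Union>N")
    case True
    then obtain u where u: "u \<in> V" "\<And>N. max_matching E N \<Longrightarrow> u \<in> \<Union>N" by blast
    define E' where "E' = {e\<in>E. u \<notin> e}"
    have G': "simple_graph (V - {u}) E'"
      using G unfolding simple_graph_def E'_def by auto
    have "card (V - {u}) < card V"
      using G u(1) unfolding simple_graph_def by (meson card_Diff1_less)
    moreover obtain M' where M': "max_matching E' M'"
      using max_matching_exists simple_graph_finite_edges[OF G'] by blast
    ultimately obtain X' where X': "admissible (card M') (V - {u}) E' X'"
      using less.hyps G' by blast
    have "card M' < card M"
      using card_max_matching_delete_vertex[OF M u(2)] M' unfolding E'_def by blast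
    moreover have "u \<notin> X'" "finite X'"
      using X' G unfolding admissible_def simple_graph_def by (auto intro: finite_subset)
    ultimately have "admissible (card M) V E (insert u X')"
      using X' u(1) components_minus_delete_vertex[of V u E X']
      unfolding admissible_def E'_def by auto
    then show ?thesis by blast
  next
    case False
    then have missed: "\<forall>w\<in>V. \<exists>N. max_matching E N \<and> w \<notin> \<Union>N" by blast
    have "(\<Sum>C\<in>components_minus V E {}. card C div 2)
        \<le> (\<Sum>C\<in>components_minus V E {}. card {e\<in>M. e \<subseteq> C})"
      using card_component_le_matched[OF G missed M] by (rule sum_mono)
    also have "\<dots> = card {e\<in>M. e \<inter> {} = {}}"
      using card_edges_avoiding_eq_sum[OF G, of M "{}"] M
      unfolding max_matching_def matching_def by simp
    finally have "admissible (card M) V E {}" unfolding admissible_def by simp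
    then show ?thesis by blast
  qed
qed

lemma x_param_attained:
  assumes G: "simple_graph V E" and "\<not> has_matching (s + 1) E"
  obtains X where "admissible s V E X" "card X = x_param s V E"
proof -
  obtain M where M: "max_matching E M"
    using max_matching_exists simple_graph_finite_edges[OF G] by blast
  then have "card M \<le> s"
    using card_matching_le[OF assms(2)] finite_matching[OF G] unfolding max_matching_def by blast
  moreover obtain X0 where "admissible (card M) V E X0" using max_matching_admissible[OF G M] by blast
  ultimately have "admissible s V E X0" unfolding admissible_def by simp
  then have "{card X | X. admissible s V E X} \<noteq> {}" by blast
  moreover have "{card X | X. admissible s V E X} \<subseteq> {..card V}"
    using G unfolding admissible_def simple_graph_def by (auto intro: card_mono)
  then have "finite {card X | X. admissible s V E X}" by (rule finite_subset) simp
  ultimately have "x_param s V E \<in> {card X | X. admissible s V E X}"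
    unfolding x_param_def by (rule Max_in[rotated])
  then obtain X where "admissible s V E X" "x_param s V E = card X" by blast
  then show ?thesis using that by simp
qed

section \<open>Counting edges\<close>

lemma le_pred_add_choose:
  assumes "1 \<le> l" shows "d \<le> (l - 1) + (d choose l)"
proof (induction d)
  case (Suc d)
  show ?case
  proof (cases "Suc d \<le> l - 1")
    case False
    obtain l' where l': "l = Suc l'" using assms by (cases l) auto
    with False have "l' \<le> d" by simp
    then have "1 \<le> d choose l'" by (simp add: Suc_leI zero_less_binomial)
    moreover have "Suc d choose l = (d choose l) + (d choose l')" using l' by simp
    ultimately show ?thesis using Suc.IH by simp
  qed simp
qed simp

lemma sum_card_filter_swap:
  assumes "finite A" "finite B"
  shows "(\<Sum>a\<in>A. card {b\<in>B. R a b}) = (\<Sum>b\<in>B. card {a\<in>A. R a b})"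
proof -
  have "(\<Sum>a\<in>A. card {b\<in>B. R a b}) = (\<Sum>a\<in>A. \<Sum>b\<in>B. if R a b then 1 else 0)"
    using assms(2) by (simp add: sum.inter_filter[symmetric])
  also have "\<dots> = (\<Sum>b\<in>B. \<Sum>a\<in>A. if R a b then 1 else 0)" by (rule sum.swap)
  also have "\<dots> = (\<Sum>b\<in>B. card {a\<in>A. R a b})"
    using assms(1) by (simp add: sum.inter_filter[symmetric])
  finally show ?thesis .
qed

lemma card_common_nbrs_less:
  assumes G: "simple_graph V E" and free: "\<not> has_Klt l t V E" and "S \<subseteq> V" "card S = l"
  shows "card {v\<in>V. \<forall>a\<in>S. {a, v} \<in> E} < t"
proof (rule ccontr)
  assume "\<not> ?thesis"
  then obtain B where B: "B \<subseteq> {v\<in>V. \<forall>a\<in>S. {a, v} \<in> E}" "card B = t"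
    by (meson not_less obtain_subset_with_card_n)
  have "v \<notin> B" if "v \<in> S" for v
  proof
    assume "v \<in> B"
    then have "{v, v} \<in> E" using B(1) that by blast
    then show False using simple_graph_edge_neq[OF G] by blast
  qed
  then have "S \<inter> B = {}" by blast
  moreover have "B \<subseteq> V" "\<And>a b. a \<in> S \<Longrightarrow> b \<in> B \<Longrightarrow> {a, b} \<in> E" using B(1) by blast+
  ultimately have "has_Klt l t V E" using has_KltI[of S V B l t E] assms(3,4) B(2) by blast
  with free show False by blast
qed

text \<open>Double counting of the pairs \<open>(S, v)\<close> with \<open>S\<close> an \<open>l\<close>-subset of \<open>X\<close> joined to \<open>v\<close>.\<close>
lemma sum_choose_degree_le:
  assumes G: "simple_graph V E" and free: "\<not> has_Klt l t V E" and "X \<subseteq> V"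
  shows "(\<Sum>v\<in>V. card {a\<in>X. {a, v} \<in> E} choose l) \<le> (t - 1) * (card X choose l)"
proof -
  have finV: "finite V" and finX: "finite X"
    using G \<open>X \<subseteq> V\<close> unfolding simple_graph_def by (auto intro: finite_subset)
  define P where "P = {S. S \<subseteq> X \<and> card S = l}"
  have "finite P" unfolding P_def using finX by simp
  have "card {a\<in>X. {a, v} \<in> E} choose l = card {S\<in>P. \<forall>a\<in>S. {a, v} \<in> E}" for v
  proof -
    have "{S\<in>P. \<forall>a\<in>S. {a, v} \<in> E} = {S. S \<subseteq> {a\<in>X. {a, v} \<in> E} \<and> card S = l}"
      unfolding P_def by auto
    then show ?thesis using n_subsets[of "{a\<in>X. {a, v} \<in> E}" l] finX by simp
  qed
  then have "(\<Sum>v\<in>V. card {a\<in>X. {a, v} \<in> E} choose l)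
      = (\<Sum>S\<in>P. card {v\<in>V. \<forall>a\<in>S. {a, v} \<in> E})"
    using sum_card_filter_swap[OF finV \<open>finite P\<close>] by simp
  also have "\<dots> \<le> (\<Sum>S\<in>P. t - 1)"
  proof (rule sum_mono)
    fix S assume "S \<in> P"
    then have "S \<subseteq> V" "card S = l" using \<open>X \<subseteq> V\<close> unfolding P_def by auto
    from card_common_nbrs_less[OF G free this]
    show "card {v\<in>V. \<forall>a\<in>S. {a, v} \<in> E} \<le> t - 1" by simp
  qed
  also have "\<dots> = (t - 1) * (card X choose l)" unfolding P_def using n_subsets[OF finX] by simp
  finally show ?thesis .
qed

lemma card_nbrs_eq_card_edges:
  assumes G: "simple_graph V E"
  shows "card {a\<in>X. {a, v} \<in> E} = card {e\<in>E. v \<in> e \<and> e - {v} \<subseteq> X}"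
proof -
  have inj: "inj_on (\<lambda>a. {a, v}) {a\<in>X. {a, v} \<in> E}"
    by (rule inj_onI) (auto simp: doubleton_eq_iff)
  have "(\<lambda>a. {a, v}) ` {a\<in>X. {a, v} \<in> E} = {e\<in>E. v \<in> e \<and> e - {v} \<subseteq> X}"
  proof (intro equalityI subsetI)
    fix e assume "e \<in> (\<lambda>a. {a, v}) ` {a\<in>X. {a, v} \<in> E}"
    then obtain a where a: "a \<in> X" "{a, v} \<in> E" "e = {a, v}" by blast
    moreover have "a \<noteq> v" using simple_graph_edge_neq[OF G a(2)] .
    ultimately show "e \<in> {e\<in>E. v \<in> e \<and> e - {v} \<subseteq> X}" by blast
  next
    fix e assume e: "e \<in> {e\<in>E. v \<in> e \<and> e - {v} \<subseteq> X}"
    then obtain y where y: "e = {v, y}" "y \<noteq> v" using simple_graph_edge_at[OF G] by blast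
    then have "y \<in> X" "e = {y, v}" using e by auto
    with e show "e \<in> (\<lambda>a. {a, v}) ` {a\<in>X. {a, v} \<in> E}" by blast
  qed
  with card_image[OF inj] show ?thesis by simp
qed

lemma card_endpoints_with_partner_in:
  assumes "p \<noteq> q"
  shows "card {v\<in>{p, q}. {p, q} - {v} \<subseteq> X} + card {v\<in>{p, q} - X. {p, q} - {v} \<subseteq> X}
    = (if {p, q} \<inter> X = {} then 0 else 2)"
proof (cases "p \<in> X"; cases "q \<in> X")
  assume "p \<in> X" "q \<in> X"
  then have "{v\<in>{p, q}. {p, q} - {v} \<subseteq> X} = {p, q}" "{v\<in>{p, q} - X. {p, q} - {v} \<subseteq> X} = {}"
    by auto
  then show ?thesis using assms \<open>p \<in> X\<close> by simp
next
  assume "p \<in> X" "q \<notin> X"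
  then have "{v\<in>{p, q}. {p, q} - {v} \<subseteq> X} = {q}" "{v\<in>{p, q} - X. {p, q} - {v} \<subseteq> X} = {q}"
    using assms by auto
  then show ?thesis using \<open>p \<in> X\<close> by simp
next
  assume "p \<notin> X" "q \<in> X"
  then have "{v\<in>{p, q}. {p, q} - {v} \<subseteq> X} = {p}" "{v\<in>{p, q} - X. {p, q} - {v} \<subseteq> X} = {p}"
    using assms by auto
  then show ?thesis using \<open>q \<in> X\<close> by simp
next
  assume "p \<notin> X" "q \<notin> X"
  then have "{v\<in>{p, q}. {p, q} - {v} \<subseteq> X} = {}" "{v\<in>{p, q} - X. {p, q} - {v} \<subseteq> X} = {}"
    "{p, q} \<inter> X = {}"
    using assms by auto
  then show ?thesis by simp
qed

text \<open>An edge inside \<open>X\<close> is counted twice by the first sum, an edge from \<open>X\<close> to \<open>V - X\<close>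
  once by each sum.\<close>
lemma sum_degree_into:
  assumes G: "simple_graph V E" and "X \<subseteq> V"
  shows "(\<Sum>v\<in>V. card {a\<in>X. {a, v} \<in> E}) + (\<Sum>v\<in>V - X. card {a\<in>X. {a, v} \<in> E})
    = 2 * card {e\<in>E. e \<inter> X \<noteq> {}}"
proof -
  have finV: "finite V" and finE: "finite E"
    using G simple_graph_finite_edges unfolding simple_graph_def by auto
  have "(\<Sum>v\<in>Y. card {a\<in>X. {a, v} \<in> E}) = (\<Sum>e\<in>E. card {v\<in>Y. v \<in> e \<and> e - {v} \<subseteq> X})"
    if "Y \<subseteq> V" for Y
    using card_nbrs_eq_card_edges[OF G] sum_card_filter_swap[OF finite_subset[OF that finV] finE]
    by simp
  then have "(\<Sum>v\<in>V. card {a\<in>X. {a, v} \<in> E}) + (\<Sum>v\<in>V - X. card {a\<in>X. {a, v} \<in> E})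
      = (\<Sum>e\<in>E. card {v\<in>V. v \<in> e \<and> e - {v} \<subseteq> X} + card {v\<in>V - X. v \<in> e \<and> e - {v} \<subseteq> X})"
    by (simp add: sum.distrib)
  also have "\<dots> = (\<Sum>e\<in>E. if e \<inter> X = {} then 0 else 2)"
  proof (rule sum.cong[OF refl])
    fix e assume "e \<in> E"
    then obtain p q where pq: "e = {p, q}" "p \<noteq> q" "p \<in> V" "q \<in> V"
      by (rule simple_graph_edgeE[OF G])
    then have "{v\<in>V. v \<in> e \<and> e - {v} \<subseteq> X} = {v\<in>{p, q}. {p, q} - {v} \<subseteq> X}"
      "{v\<in>V - X. v \<in> e \<and> e - {v} \<subseteq> X} = {v\<in>{p, q} - X. {p, q} - {v} \<subseteq> X}"
      by auto
    then show "card {v\<in>V. v \<in> e \<and> e - {v} \<subseteq> X} + card {v\<in>V - X. v \<in> e \<and> e - {v} \<subseteq> X}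
        = (if e \<inter> X = {} then 0 else 2)"
      using card_endpoints_with_partner_in[OF pq(2)] pq(1) by simp
  qed
  also have "\<dots> = 2 * card {e\<in>E. e \<inter> X \<noteq> {}}"
    using finE by (simp add: sum.If_cases Int_def)
  finally show ?thesis .
qed

lemma card_edges_meeting_le:
  assumes G: "simple_graph V E" and free: "\<not> has_Klt l t V E" and "X \<subseteq> V" and "1 \<le> l"
  shows "2 * card {e\<in>E. e \<inter> X \<noteq> {}} + (l - 1) * card X
    \<le> 2 * ((l - 1) * card V) + 2 * ((t - 1) * (card X choose l))"
proof -
  define d where "d v = card {a\<in>X. {a, v} \<in> E}" for v
  define c where "c v = d v choose l" for v
  have finV: "finite V" using G unfolding simple_graph_def by blast
  have bound: "sum d A \<le> (l - 1) * card A + sum c A" for A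
  proof -
    have "sum d A \<le> (\<Sum>v\<in>A. (l - 1) + c v)"
      unfolding c_def using le_pred_add_choose[OF \<open>1 \<le> l\<close>] by (rule sum_mono)
    then show ?thesis by (simp add: sum.distrib mult.commute)
  qed
  have "2 * card {e\<in>E. e \<inter> X \<noteq> {}} = sum d X + 2 * sum d (V - X)"
    using sum_degree_into[OF G \<open>X \<subseteq> V\<close>] sum.subset_diff[OF \<open>X \<subseteq> V\<close> finV, of d]
    unfolding d_def by simp
  also have "\<dots> \<le> (l - 1) * card X + 2 * ((l - 1) * card (V - X)) + (sum c X + 2 * sum c (V - X))"
    using bound[of X] bound[of "V - X"] by simp
  also have "sum c X + 2 * sum c (V - X) \<le> 2 * ((t - 1) * (card X choose l))"
    using sum_choose_degree_le[OF G free \<open>X \<subseteq> V\<close>] sum.subset_diff[OF \<open>X \<subseteq> V\<close> finV, of c]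
    unfolding c_def d_def by simp
  finally have "2 * card {e\<in>E. e \<inter> X \<noteq> {}} + (l - 1) * card X
      \<le> (l - 1) * (2 * card X + 2 * card (V - X)) + 2 * ((t - 1) * (card X choose l))"
    by (simp add: algebra_simps)
  moreover have "card X + card (V - X) = card V"
    using card_Diff_subset[OF finite_subset[OF \<open>X \<subseteq> V\<close> finV] \<open>X \<subseteq> V\<close>]
      card_mono[OF finV \<open>X \<subseteq> V\<close>] by simp
  then have "(l - 1) * (2 * card X + 2 * card (V - X)) = 2 * ((l - 1) * card V)"
    by (metis add_mult_distrib2 mult.left_commute)
  ultimately show ?thesis by linarith
qed

lemma card_edges_avoiding_le:
  assumes G: "simple_graph V E" and free: "\<not> has_Klt l t V E" and X: "admissible s V E X"
    and "2 \<le> l" "2 \<le> t"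
  shows "card {e\<in>E. e \<inter> X = {}} \<le> ex_Klt (2 * (s - card X) + 1) l t"
proof -
  have lt: "1 \<le> l" "1 \<le> t" using assms(4,5) by auto
  have fin: "finite (components_minus V E X)"
    using G finite_components unfolding simple_graph_def by blast
  have "card {e\<in>E. e \<inter> X = {}} = (\<Sum>C\<in>components_minus V E X. card {e\<in>E. e \<subseteq> C})"
    by (rule card_edges_avoiding_eq_sum[OF G order_refl])
  also have "\<dots> \<le> (\<Sum>C\<in>components_minus V E X. ex_Klt (2 * (card C div 2) + 1) l t)"
  proof (rule sum_mono)
    fix C assume "C \<in> components_minus V E X"
    then have "C \<subseteq> V" using component_subset by blast
    have "simple_graph C {e\<in>E. e \<subseteq> C}"
      by (rule simple_graph_subgraph[OF G \<open>C \<subseteq> V\<close>]) auto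
    moreover have "\<not> has_Klt l t C {e\<in>E. e \<subseteq> C}"
    proof
      assume "has_Klt l t C {e\<in>E. e \<subseteq> C}"
      then have "has_Klt l t V E" by (rule has_Klt_mono) (use \<open>C \<subseteq> V\<close> in auto)
      with free show False ..
    qed
    moreover have "card C \<le> 2 * (card C div 2) + 1" by simp
    ultimately show "card {e\<in>E. e \<subseteq> C} \<le> ex_Klt (2 * (card C div 2) + 1) l t"
      using lt by (rule card_le_ex_Klt)
  qed
  also have "\<dots> \<le> ex_Klt (2 * (\<Sum>C\<in>components_minus V E X. card C div 2) + 1) l t"
    by (rule sum_ex_Klt_le[OF fin assms(4,5)])
  also have "\<dots> \<le> ex_Klt (2 * (s - card X) + 1) l t"
    by (rule ex_Klt_mono) (use X lt in \<open>auto simp: admissible_def\<close>)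
  finally show ?thesis .
qed

theorem lemma3p4:
  fixes l t s x n :: nat and V :: "'a set" and E :: "'a set set"
  assumes "n \<ge> 2 * s + 1" and "t \<ge> l" and "2 \<le> l" and "l \<le> x" and "x \<le> s"
    and "simple_graph V E" and "card V = n"
    and "\<not> has_Klt l t V E" and "\<not> has_matching (s + 1) E"
    and "x_param s V E = x"
  shows "int (card E) \<le> int ((t - 1) * (x choose l)) + int ((l - 1) * n)
           - ceiling (real (x * (l - 1)) / 2) + int (ex_Klt (2 * (s - x) + 1) l t)"
proof -
  obtain X where X: "admissible s V E X" "card X = x"
    using x_param_attained[OF assms(6,9)] assms(10) by metis
  have XV: "X \<subseteq> V" using X(1) unfolding admissible_def by blast
  have "card E = card ({e\<in>E. e \<inter> X \<noteq> {}} \<union> {e\<in>E. e \<inter> X = {}})"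
    by (rule arg_cong[where f = card]) blast
  also have "\<dots> = card {e\<in>E. e \<inter> X \<noteq> {}} + card {e\<in>E. e \<inter> X = {}}"
    using simple_graph_finite_edges[OF assms(6)] by (intro card_Un_disjoint) auto
  finally have split: "card E = card {e\<in>E. e \<inter> X \<noteq> {}} + card {e\<in>E. e \<inter> X = {}}" .
  have inside: "card {e\<in>E. e \<inter> X = {}} \<le> ex_Klt (2 * (s - x) + 1) l t"
    using card_edges_avoiding_le[OF assms(6,8) X(1) assms(3)] assms(2,3) X(2) by simp
  have "2 * card {e\<in>E. e \<inter> X \<noteq> {}} + x * (l - 1)
      \<le> 2 * ((l - 1) * n) + 2 * ((t - 1) * (x choose l))"
    using card_edges_meeting_le[OF assms(6,8) XV] X(2) assms(3,7) by (simp add: mult.commute)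
  then have "real (x * (l - 1)) / 2
      \<le> real ((t - 1) * (x choose l)) + real ((l - 1) * n) - real (card {e\<in>E. e \<inter> X \<noteq> {}})"
    by linarith
  then have "ceiling (real (x * (l - 1)) / 2)
      \<le> int ((t - 1) * (x choose l)) + int ((l - 1) * n) - int (card {e\<in>E. e \<inter> X \<noteq> {}})"
    by (simp add: ceiling_le_iff)
  with split inside show ?thesis by linarith
qed

end
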